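(* Consider the two-route traffic model described in the context, under assumptions (A1)–(A6) listed there. Then the system admits a unique equilibrium point $\overline{x}\in\Omega$, and $\overline{x}\in P:=\{x\in\Omega:\ 0\le x_1\le C_1,\ 0\le x_2\le C_2\}$.
   Context: Two routes $i=1,2$ connect an origin to a destination. For each route there are positive parameters $B_i$ (jam density), $C_i$ (critical density), $F_i$ (maximum capacity) with $C_i<B_i$; the traffic demand is a constant $\phi>0$. Set $v_i=F_i/C_i$ and $E_i=v_iB_i$ (virtual capacity). The state is $x=(x_1,x_2)\in\Omega:=[0,B_1]\times[0,B_2]$ and evolves by $\dot x_i=\min\{\phi R_i(x),S_i(x_i)\}-D_i(x_i)$, $i=1,2$, where $S_i(x_i)=F_i$ if $x_i<C_i$ and $S_i(x_i)=\frac{F_i}{B_i-C_i}(B_i-x_i)$ otherwise, and $D_i(x_i)=v_ix_i$ if $x_i<C_i$ and $D_i(x_i)=F_i$ otherwise. The routing ratios are $R_i(x)=(1-\alpha)r_i^0+\alpha\, r_i(\tau(x))$, where $\alpha\in(0,1]$, $r_1^0,r_2^0\ge0$ with $r_1^0+r_2^0=1$, $\tau(x)=(\tau_1(x_1),\tau_2(x_2))$ with each $\tau_i$ a $C^1$ strictly increasing function, and $0\le r_i(\tau(x))\le1$, $r_1(\tau(x))+r_2(\tau(x))=1$ on $\Omega$, with $x\mapsto r_i(\tau(x))$ globally Lipschitz and $C^1$ on $\Omega$. Assumptions: (A1) $\phi<F_1+F_2$; (A2)–(A3) the properties of $\tau_i,r_i$ just listed; (A4) strict monotonicity $\partial R_i/\partial\tau_j>0$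 for $i\ne j$; (A5) $F_i>(1-\alpha)\phi r_i^0$, $i=1,2$; (A6) $\phi<E_i$, $i=1,2$. *)

theory Defs
  imports "HOL-Analysis.Analysis"
begin

text \<open>Sending (supply) function S_i with parameters F (capacity), B (jam density),
  C (critical density).\<close>
definition supply_fn :: "real \<Rightarrow> real \<Rightarrow> real \<Rightarrow> real \<Rightarrow> real" where
  "supply_fn F B C x = (if x < C then F else F / (B - C) * (B - x))"

text \<open>Demand function D_i, with free-flow speed v = F / C.\<close>
definition demand_fn :: "real \<Rightarrow> real \<Rightarrow> real \<Rightarrow> real" where
  "demand_fn F C x = (if x < C then (F / C) * x else F)"

definition routing_ratio ::
  "real \<Rightarrow> real \<Rightarrow> (real \<Rightarrow> real \<Rightarrow> real) \<Rightarrow> (real \<Rightarrow> real) \<Rightarrow> (real \<Rightarrow> real)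
     \<Rightarrow> real \<times> real \<Rightarrow> real" where
  "routing_ratio \<alpha> r0 r \<tau>1 \<tau>2 x = (1 - \<alpha>) * r0 + \<alpha> * r (\<tau>1 (fst x)) (\<tau>2 (snd x))"

definition route_field :: "real \<Rightarrow> real \<Rightarrow> real \<Rightarrow> real \<Rightarrow> real \<Rightarrow> real \<Rightarrow> real" where
  "route_field \<phi> F B C Ri xi = min (\<phi> * Ri) (supply_fn F B C xi) - demand_fn F C xi"

end

theory Submission
  imports Defs
begin

(* An equilibrium density x_i has free-flow outflow v_i x_i equal to the admitted inflow
   min(phi R_i(x), F_i): in congestion (x_i >= C_i) the supply falls below F_i, so only x_i = C_i
   can balance the outflow F_i. Hence the equilibria are exactly the fixed points of
   G(x) = ((C_i / F_i) min(phi R_i(x), F_i))_i, a continuous map of Omega into P, and Brouwer's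
   theorem gives one. For uniqueness, R_1 is nondecreasing in x_2 and R_2 in x_1 (by (A4) and
   the monotonicity of tau), while R_1 + R_2 = 1. If fixed points x, y had R_1(x) > R_1(y), then
   x_1 >= y_1 and x_2 <= y_2, so R_1(x) = 1 - R_2(x) <= 1 - R_2(y_1, x_2) = R_1(y_1, x_2) <= R_1(y),
   a contradiction; thus R(x) = R(y) and x = G x = G y = y. *)

lemma mono_on_Icc_if_has_real_derivative_nonneg:
  fixes f :: "real \<Rightarrow> real"
  assumes deriv: "\<And>x. x \<in> {a..b} \<Longrightarrow> \<exists>D\<ge>0. (f has_real_derivative D) (at x within {a..b})"
  shows "mono_on {a..b} f"
proof (rule mono_onI)
  fix s t assume st: "s \<in> {a..b}" "t \<in> {a..b}" "s \<le> t"
  have "continuous_on {a..b} f"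
    using deriv DERIV_continuous by (metis continuous_on_eq_continuous_within)
  then have "continuous_on {s..t} f"
    by (rule continuous_on_subset) (use st in auto)
  moreover have "\<exists>D. (f has_real_derivative D) (at x) \<and> D \<ge> 0" if "s < x" "x < t" for x
  proof -
    have "a < x" "x < b" using st that by auto
    then show ?thesis using deriv[of x] by (auto simp: at_within_Icc_at)
  qed
  ultimately show "f s \<le> f t"
    using DERIV_nonneg_imp_increasing_open[OF \<open>s \<le> t\<close>] by blast
qed

lemma mono_on_image_Icc:
  fixes f :: "real \<Rightarrow> real"
  assumes "a \<le> b" "continuous_on {a..b} f" "mono_on {a..b} f"
  shows "f ` {a..b} = {f a..f b}"
proof
  show "f ` {a..b} \<subseteq> {f a..f b}"
    using assms by (auto intro!: mono_onD[of "{a..b}" f])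
  show "{f a..f b} \<subseteq> f ` {a..b}"
  proof
    fix y assume "y \<in> {f a..f b}"
    then obtain x where "a \<le> x" "x \<le> b" "f x = y"
      using IVT'[of f a y b] assms by auto
    then show "y \<in> f ` {a..b}" by auto
  qed
qed

lemma mono_on_comp_if_has_real_derivative_nonneg:
  fixes f \<tau> :: "real \<Rightarrow> real"
  assumes cont: "continuous_on {a..b} \<tau>" and mono: "mono_on {a..b} \<tau>"
    and deriv: "\<And>s. s \<in> {a..b} \<Longrightarrow> \<exists>D\<ge>0. (f has_real_derivative D) (at (\<tau> s) within \<tau> ` {a..b})"
  shows "mono_on {a..b} (f \<circ> \<tau>)"
proof (cases "a \<le> b")
  case True
  then have image: "\<tau> ` {a..b} = {\<tau> a..\<tau> b}"
    using cont mono by (rule mono_on_image_Icc)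
  have "mono_on {\<tau> a..\<tau> b} f"
  proof (rule mono_on_Icc_if_has_real_derivative_nonneg)
    fix y assume "y \<in> {\<tau> a..\<tau> b}"
    then obtain s where "s \<in> {a..b}" "y = \<tau> s"
      unfolding image[symmetric] by blast
    then show "\<exists>D\<ge>0. (f has_real_derivative D) (at y within {\<tau> a..\<tau> b})"
      using deriv image by auto
  qed
  then show ?thesis
  proof (intro mono_onI, unfold o_def)
    fix s t assume "s \<in> {a..b}" "t \<in> {a..b}" "s \<le> t"
    then show "f (\<tau> s) \<le> f (\<tau> t)"
      using \<open>mono_on {\<tau> a..\<tau> b} f\<close> mono image
      by (auto intro!: mono_onD[of _ f] mono_onD[of _ \<tau>])
  qed
qed (simp add: mono_on_def)

(* The free-flow density whose outflow (F / C) x equals the admitted inflow min(phi R, F). *)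
definition equilibrium_density :: "real \<Rightarrow> real \<Rightarrow> real \<Rightarrow> real \<Rightarrow> real" where
  "equilibrium_density \<phi> F C R = C / F * min (\<phi> * R) F"

lemma route_field_eq_0_iff:
  assumes "0 < C" "C < B" "0 < F"
  shows "route_field \<phi> F B C R x = 0 \<longleftrightarrow> x = equilibrium_density \<phi> F C R"
proof (cases "x < C")
  case True
  then show ?thesis using assms
    by (auto simp: route_field_def supply_fn_def demand_fn_def equilibrium_density_def field_simps)
next
  case False
  have supply_le: "F / (B - C) * (B - x) \<le> F"
    using assms False by (auto simp: field_simps intro!: mult_left_mono)
  have supply_eq: "F / (B - C) * (B - x) = F \<longleftrightarrow> x = C"
    using assms by (auto simp: field_simps)
  have "equilibrium_density \<phi> F C R \<le> C"
    using assms by (auto simp: equilibrium_density_def field_simps min_def)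
  then have "x = equilibrium_density \<phi> F C R \<longleftrightarrow> x = C \<and> equilibrium_density \<phi> F C R = C"
    using False by auto
  also have "equilibrium_density \<phi> F C R = C \<longleftrightarrow> F \<le> \<phi> * R"
    using assms by (auto simp: equilibrium_density_def min_def field_simps)
  finally have "x = equilibrium_density \<phi> F C R \<longleftrightarrow> x = C \<and> F \<le> \<phi> * R" .
  moreover have "route_field \<phi> F B C R x = 0 \<longleftrightarrow> x = C \<and> F \<le> \<phi> * R"
    using False supply_le supply_eq
    by (auto simp: route_field_def supply_fn_def demand_fn_def min_def)
  ultimately show ?thesis by simp
qed

lemma equilibrium_density_bounds:
  assumes "0 \<le> \<phi> * R" "0 < F" "0 < C"
  shows "equilibrium_density \<phi> F C R \<in> {0..C}"
  using assms by (auto simp: equilibrium_density_def field_simps min_def)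

lemma mono_equilibrium_density:
  assumes "0 \<le> \<phi>" "0 < F" "0 < C"
  shows "mono (equilibrium_density \<phi> F C)"
  unfolding equilibrium_density_def
  using assms by (intro monoI mult_left_mono min.mono) auto

lemma fixed_point_unique_if_cross_monotone:
  fixes R1 R2 :: "real \<times> real \<Rightarrow> real" and h1 h2 :: "real \<Rightarrow> real"
  defines "G \<equiv> \<lambda>x. (h1 (R1 x), h2 (R2 x))"
  assumes "mono h1" "mono h2"
    and sum: "\<And>x. x \<in> A \<times> B \<Longrightarrow> R1 x + R2 x = 1"
    and mono1: "\<And>a. a \<in> A \<Longrightarrow> mono_on B (\<lambda>s. R1 (a, s))"
    and mono2: "\<And>b. b \<in> B \<Longrightarrow> mono_on A (\<lambda>s. R2 (s, b))"
    and x: "x \<in> A \<times> B" "G x = x" and y: "y \<in> A \<times> B" "G y = y"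
  shows "x = y"
proof -
  have not_less: "\<not> R1 v < R1 u"
    if u: "u \<in> A \<times> B" "G u = u" and v: "v \<in> A \<times> B" "G v = v" for u v
  proof
    assume less: "R1 v < R1 u"
    then have "fst v \<le> fst u"
      using u v \<open>mono h1\<close> unfolding G_def by (metis fst_conv less_imp_le monoD)
    have "R2 u < R2 v"
      using less sum[OF u(1)] sum[OF v(1)] by simp
    then have "snd u \<le> snd v"
      using u v \<open>mono h2\<close> unfolding G_def by (metis snd_conv less_imp_le monoD)
    have mixed: "(fst v, snd u) \<in> A \<times> B"
      using u v by (auto simp: mem_Times_iff)
    have "R1 u = 1 - R2 (fst u, snd u)"
      using sum[OF u(1)] by simp
    also have "\<dots> \<le> 1 - R2 (fst v, snd u)"
      using mono_onD[OF mono2[of "snd u"] _ _ \<open>fst v \<le> fst u\<close>] u v by (auto simp: mem_Times_iff)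
    also have "\<dots> = R1 (fst v, snd u)"
      using sum[OF mixed] by simp
    also have "\<dots> \<le> R1 v"
      using mono_onD[OF mono1[of "fst v"] _ _ \<open>snd u \<le> snd v\<close>] u v by (auto simp: mem_Times_iff)
    finally show False
      using less by simp
  qed
  have "R1 x = R1 y" "R2 x = R2 y"
    using not_less[OF x y] not_less[OF y x] sum[OF x(1)] sum[OF y(1)] by auto
  then show ?thesis
    using x(2) y(2) unfolding G_def by metis
qed

lemma routing_ratio_sum:
  assumes "r01 + r02 = 1" "r1 (\<tau>1 (fst x)) (\<tau>2 (snd x)) + r2 (\<tau>1 (fst x)) (\<tau>2 (snd x)) = 1"
  shows "routing_ratio \<alpha> r01 r1 \<tau>1 \<tau>2 x + routing_ratio \<alpha> r02 r2 \<tau>1 \<tau>2 x = 1"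
proof -
  have "routing_ratio \<alpha> r01 r1 \<tau>1 \<tau>2 x + routing_ratio \<alpha> r02 r2 \<tau>1 \<tau>2 x
      = (1 - \<alpha>) * (r01 + r02) + \<alpha> * (r1 (\<tau>1 (fst x)) (\<tau>2 (snd x)) + r2 (\<tau>1 (fst x)) (\<tau>2 (snd x)))"
    unfolding routing_ratio_def by algebra
  then show ?thesis
    using assms by simp
qed

lemma routing_ratio_nonneg:
  assumes "0 \<le> \<alpha>" "\<alpha> \<le> 1" "0 \<le> r0" "0 \<le> r (\<tau>1 (fst x)) (\<tau>2 (snd x))"
  shows "0 \<le> routing_ratio \<alpha> r0 r \<tau>1 \<tau>2 x"
  using assms unfolding routing_ratio_def by simp

lemma continuous_on_routing_ratio:
  assumes "lipschitz_on L S (\<lambda>x. r (\<tau>1 (fst x)) (\<tau>2 (snd x)))"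
  shows "continuous_on S (routing_ratio \<alpha> r0 r \<tau>1 \<tau>2)"
  using lipschitz_on_continuous_on[OF assms] unfolding routing_ratio_def by (intro continuous_intros)

lemma mono_on_routing_ratio_snd:
  assumes "continuous_on {0..B} \<tau>2" "mono_on {0..B} \<tau>2"
    and deriv: "\<forall>x\<in>A \<times> {0..B}. \<exists>D>0. ((\<lambda>t. (1 - \<alpha>) * r0 + \<alpha> * r (\<tau>1 (fst x)) t) has_real_derivative D)
      (at (\<tau>2 (snd x)) within \<tau>2 ` {0..B})"
    and "a \<in> A"
  shows "mono_on {0..B} (\<lambda>s. routing_ratio \<alpha> r0 r \<tau>1 \<tau>2 (a, s))"
proof -
  have "mono_on {0..B} ((\<lambda>t. (1 - \<alpha>) * r0 + \<alpha> * r (\<tau>1 a) t) \<circ> \<tau>2)"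
  proof (rule mono_on_comp_if_has_real_derivative_nonneg[OF assms(1,2)])
    fix s assume "s \<in> {0..B}"
    then show "\<exists>D\<ge>0. ((\<lambda>t. (1 - \<alpha>) * r0 + \<alpha> * r (\<tau>1 a) t) has_real_derivative D) (at (\<tau>2 s) within \<tau>2 ` {0..B})"
      using deriv \<open>a \<in> A\<close> by (fastforce dest: less_imp_le)
  qed
  then show ?thesis
    unfolding routing_ratio_def o_def by simp
qed

lemma mono_on_routing_ratio_fst:
  assumes "continuous_on {0..B} \<tau>1" "mono_on {0..B} \<tau>1"
    and deriv: "\<forall>x\<in>{0..B} \<times> A. \<exists>D>0. ((\<lambda>t. (1 - \<alpha>) * r0 + \<alpha> * r t (\<tau>2 (snd x))) has_real_derivative D)
      (at (\<tau>1 (fst x)) within \<tau>1 ` {0..B})"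
    and "b \<in> A"
  shows "mono_on {0..B} (\<lambda>s. routing_ratio \<alpha> r0 r \<tau>1 \<tau>2 (s, b))"
proof -
  have "mono_on {0..B} ((\<lambda>t. (1 - \<alpha>) * r0 + \<alpha> * r t (\<tau>2 b)) \<circ> \<tau>1)"
  proof (rule mono_on_comp_if_has_real_derivative_nonneg[OF assms(1,2)])
    fix s assume "s \<in> {0..B}"
    then show "\<exists>D\<ge>0. ((\<lambda>t. (1 - \<alpha>) * r0 + \<alpha> * r t (\<tau>2 b)) has_real_derivative D) (at (\<tau>1 s) within \<tau>1 ` {0..B})"
      using deriv \<open>b \<in> A\<close> by (fastforce dest: less_imp_le)
  qed
  then show ?thesis
    unfolding routing_ratio_def o_def by simp
qed

theorem theorem1:
  fixes B1 B2 C1 C2 F1 F2 \<phi> \<alpha> r01 r02 :: real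
    and \<tau>1 \<tau>2 :: "real \<Rightarrow> real"
    and r1 r2 :: "real \<Rightarrow> real \<Rightarrow> real"
  defines "\<Omega> \<equiv> {0..B1} \<times> {0..B2}"
      and "R1 \<equiv> routing_ratio \<alpha> r01 r1 \<tau>1 \<tau>2"
      and "R2 \<equiv> routing_ratio \<alpha> r02 r2 \<tau>1 \<tau>2"
  assumes pos: "B1 > 0" "B2 > 0" "C1 > 0" "C2 > 0" "F1 > 0" "F2 > 0" "\<phi> > 0"
      and crit: "C1 < B1" "C2 < B2"
      and alpha: "0 < \<alpha>" "\<alpha> \<le> 1"
      and r0: "r01 \<ge> 0" "r02 \<ge> 0" "r01 + r02 = 1"
      \<comment> \<open>(A1)\<close>
      and A1: "\<phi> < F1 + F2"
      \<comment> \<open>(A2): tau_i is C^1 and strictly increasing (on [0, B_i])\<close>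
      and tau1_C1: "\<exists>d. continuous_on {0..B1} d \<and>
                       (\<forall>s\<in>{0..B1}. (\<tau>1 has_real_derivative d s) (at s within {0..B1}))"
      and tau2_C1: "\<exists>d. continuous_on {0..B2} d \<and>
                       (\<forall>s\<in>{0..B2}. (\<tau>2 has_real_derivative d s) (at s within {0..B2}))"
      and tau1_mono: "strict_mono_on {0..B1} \<tau>1"
      and tau2_mono: "strict_mono_on {0..B2} \<tau>2"
      \<comment> \<open>(A3): properties of r_i on Omega\<close>
      and r_bounds: "\<forall>x\<in>\<Omega>. 0 \<le> r1 (\<tau>1 (fst x)) (\<tau>2 (snd x)) \<and> r1 (\<tau>1 (fst x)) (\<tau>2 (snd x)) \<le> 1
                        \<and> 0 \<le> r2 (\<tau>1 (fst x)) (\<tau>2 (snd x)) \<and> r2 (\<tau>1 (fst x)) (\<tau>2 (snd x)) \<le> 1"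
      and r_sum: "\<forall>x\<in>\<Omega>. r1 (\<tau>1 (fst x)) (\<tau>2 (snd x)) + r2 (\<tau>1 (fst x)) (\<tau>2 (snd x)) = 1"
      and r1_lip: "\<exists>L. lipschitz_on L \<Omega> (\<lambda>x. r1 (\<tau>1 (fst x)) (\<tau>2 (snd x)))"
      and r2_lip: "\<exists>L. lipschitz_on L \<Omega> (\<lambda>x. r2 (\<tau>1 (fst x)) (\<tau>2 (snd x)))"
      and r1_C1: "\<exists>g :: real \<times> real \<Rightarrow> real \<times> real. continuous_on \<Omega> g \<and>
                    (\<forall>x\<in>\<Omega>. ((\<lambda>y. r1 (\<tau>1 (fst y)) (\<tau>2 (snd y))) has_derivative (\<lambda>h. g x \<bullet> h))
                               (at x within \<Omega>))"
      and r2_C1: "\<exists>g :: real \<times> real \<Rightarrow> real \<times> real. continuous_on \<Omega> g \<and>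
                    (\<forall>x\<in>\<Omega>. ((\<lambda>y. r2 (\<tau>1 (fst y)) (\<tau>2 (snd y))) has_derivative (\<lambda>h. g x \<bullet> h))
                               (at x within \<Omega>))"
      \<comment> \<open>(A4): dR_1/dtau_2 > 0 and dR_2/dtau_1 > 0\<close>
      and A4_1: "\<forall>x\<in>\<Omega>. \<exists>d>0. ((\<lambda>t. (1 - \<alpha>) * r01 + \<alpha> * r1 (\<tau>1 (fst x)) t) has_real_derivative d)
                              (at (\<tau>2 (snd x)) within \<tau>2 ` {0..B2})"
      and A4_2: "\<forall>x\<in>\<Omega>. \<exists>d>0. ((\<lambda>t. (1 - \<alpha>) * r02 + \<alpha> * r2 t (\<tau>2 (snd x))) has_real_derivative d)
                              (at (\<tau>1 (fst x)) within \<tau>1 ` {0..B1})"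
      \<comment> \<open>(A5)\<close>
      and A5: "F1 > (1 - \<alpha>) * \<phi> * r01" "F2 > (1 - \<alpha>) * \<phi> * r02"
      \<comment> \<open>(A6): phi < E_i = v_i B_i\<close>
      and A6: "\<phi> < (F1 / C1) * B1" "\<phi> < (F2 / C2) * B2"
  shows "\<exists>xbar\<in>\<Omega>.
           route_field \<phi> F1 B1 C1 (R1 xbar) (fst xbar) = 0 \<and>
           route_field \<phi> F2 B2 C2 (R2 xbar) (snd xbar) = 0 \<and>
           (\<forall>y\<in>\<Omega>. route_field \<phi> F1 B1 C1 (R1 y) (fst y) = 0 \<and>
                    route_field \<phi> F2 B2 C2 (R2 y) (snd y) = 0 \<longrightarrow> y = xbar) \<and>
           0 \<le> fst xbar \<and> fst xbar \<le> C1 \<and> 0 \<le> snd xbar \<and> snd xbar \<le> C2"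
proof -
  have R_sum: "R1 x + R2 x = 1" if "x \<in> \<Omega>" for x
    using routing_ratio_sum r0(3) r_sum that unfolding R1_def R2_def by blast
  have R_nonneg: "0 \<le> R1 x" "0 \<le> R2 x" if "x \<in> \<Omega>" for x
    using routing_ratio_nonneg alpha r0 r_bounds that unfolding R1_def R2_def by auto
  have R_cont: "continuous_on \<Omega> R1" "continuous_on \<Omega> R2"
    using r1_lip r2_lip continuous_on_routing_ratio unfolding R1_def R2_def by blast+
  have \<tau>_cont: "continuous_on {0..B1} \<tau>1" "continuous_on {0..B2} \<tau>2"
    using tau1_C1 tau2_C1 by (auto intro: DERIV_continuous_on)
  have R1_mono: "mono_on {0..B2} (\<lambda>s. R1 (a, s))" if "a \<in> {0..B1}" for a
    using mono_on_routing_ratio_snd[where r = r1, OF \<tau>_cont(2) strict_mono_on_imp_mono_on[OF tau2_mono]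
        A4_1[unfolded \<Omega>_def] that] unfolding R1_def .
  have R2_mono: "mono_on {0..B1} (\<lambda>s. R2 (s, b))" if "b \<in> {0..B2}" for b
    using mono_on_routing_ratio_fst[where r = r2, OF \<tau>_cont(1) strict_mono_on_imp_mono_on[OF tau1_mono]
        A4_2[unfolded \<Omega>_def] that] unfolding R2_def .
  define G where "G = (\<lambda>x. (equilibrium_density \<phi> F1 C1 (R1 x), equilibrium_density \<phi> F2 C2 (R2 x)))"
  have equilibrium_iff: "route_field \<phi> F1 B1 C1 (R1 x) (fst x) = 0 \<and> route_field \<phi> F2 B2 C2 (R2 x) (snd x) = 0
      \<longleftrightarrow> G x = x" for x
    using route_field_eq_0_iff[OF pos(3) crit(1) pos(5)] route_field_eq_0_iff[OF pos(4) crit(2) pos(6)]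
    unfolding G_def by (cases x) auto
  have G_in_P: "G x \<in> {0..C1} \<times> {0..C2}" if "x \<in> \<Omega>" for x
    using R_nonneg[OF that] pos equilibrium_density_bounds unfolding G_def by simp
  have "continuous_on \<Omega> G"
    unfolding G_def equilibrium_density_def by (intro continuous_intros R_cont)
  moreover have "G \<in> \<Omega> \<rightarrow> \<Omega>"
    using G_in_P crit by (fastforce simp: \<Omega>_def)
  moreover have "compact \<Omega>" "convex \<Omega>" "\<Omega> \<noteq> {}"
    using pos by (auto simp: \<Omega>_def compact_Times convex_Times)
  ultimately obtain xbar where xbar: "xbar \<in> \<Omega>" "G xbar = xbar"
    using brouwer by metis
  have "mono (equilibrium_density \<phi> F1 C1)" "mono (equilibrium_density \<phi> F2 C2)"
    using pos by (auto intro: mono_equilibrium_density)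
  then have unique: "y = xbar" if "y \<in> \<Omega>" "G y = y" for y
    using fixed_point_unique_if_cross_monotone[of _ _ "{0..B1}" "{0..B2}" R1 R2]
      R_sum R1_mono R2_mono that xbar
    unfolding G_def \<Omega>_def by auto
  show ?thesis
  proof (intro bexI[OF _ xbar(1)] conjI ballI impI)
    show "route_field \<phi> F1 B1 C1 (R1 xbar) (fst xbar) = 0" "route_field \<phi> F2 B2 C2 (R2 xbar) (snd xbar) = 0"
      using equilibrium_iff xbar(2) by blast+
    show "0 \<le> fst xbar" "fst xbar \<le> C1" "0 \<le> snd xbar" "snd xbar \<le> C2"
      using G_in_P[OF xbar(1)] xbar(2) by (auto simp: mem_Times_iff)
  qed (use unique equilibrium_iff in blast)
qed

end
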